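(* Let $G=\langle N,S,P\rangle$ and $G'=\langle N',S',P'\rangle$ be normal-form games with $G\sqsubseteq G'$. Let $i\in N$, and let $\sigma,\sigma'$ be mixed strategy profiles of $G,G'$ respectively with $\sigma\sim\sigma'$. Then $h_i(\sigma)=h'_i(\sigma')$, where $h_i,h'_i$ are the payoff functions of player $i$ in $G,G'$.
   Context: A normal-form game $G=\langle N,S,P\rangle$ has a finite set of players $N$, for each $i\in N$ a finite set of pure strategies $S_i$, $S=\times_{i\in N}S_i$, and payoffs $P_i:S\to\mathbb{R}$. A mixed strategy profile $\sigma=(\sigma_i)_{i\in N}$ assigns to each $i$ a probability distribution $\sigma_i=(\sigma_{ij})_{j\in S_i}$ on $S_i$; the payoff of $i$ is $h_i(\sigma)=\sum_{s\in S}P_i(s)\prod_{k\in N}\sigma_{k,s_k}$. $NE(G)$ is the set of mixed Nash equilibria. For games $G=\langle N,S,P\rangle$, $G'=\langle N',S',P'\rangle$ and profiles $\sigma$ of $G$, $\sigma'$ of $G'$, $\sigma\sim\sigma'$ (compatible) iff $\sigma_{ij}=\sigma'_{ij}$ for all $i\in N\cap N'$ and $j\in S_i\cap S'_i$. $G'$ is an inflated version of $G$, written $G\sqsubseteq G'$, iff: $N\subseteq N'$; $S_i\subseteq S'_i$ for all $i\in N$; $P_i(s)=P'_i(s')$ whenever $i\in N$, $s\in S$, $s'\in S'$ and $s_j=s'_j$ for all $j\in N$; for every $\sigma\in NE(G)$ there is $\sigma'\in NE(G')$ with $\sigma\sim\sigma'$; and for every $\sigma'\in NE(G')$ there is $\sigma\in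 NE(G)$ with $\sigma\sim\sigma'$. *)

theory Defs
  imports Complex_Main "HOL-Library.FuncSet"
begin

record ('p, 's) game =
  players :: "'p set"
  strats  :: "'p \<Rightarrow> 's set"
  payoff  :: "'p \<Rightarrow> ('p \<Rightarrow> 's) \<Rightarrow> real"

definition profiles :: "('p, 's) game \<Rightarrow> ('p \<Rightarrow> 's) set" where
  "profiles G = PiE (players G) (strats G)"

definition nf_game :: "('p, 's) game \<Rightarrow> bool" where
  "nf_game G \<longleftrightarrow> finite (players G) \<and>
     (\<forall>i\<in>players G. finite (strats G i) \<and> strats G i \<noteq> {})"

definition mixed_strategy :: "('p, 's) game \<Rightarrow> 'p \<Rightarrow> ('s \<Rightarrow> real) \<Rightarrow> bool" where
  "mixed_strategy G i t \<longleftrightarrow> (\<forall>j\<in>strats G i. t j \<ge> 0) \<and> (\<Sum>j\<in>strats G i. t j) = 1"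

definition mixed_profile :: "('p, 's) game \<Rightarrow> ('p \<Rightarrow> 's \<Rightarrow> real) \<Rightarrow> bool" where
  "mixed_profile G \<sigma> \<longleftrightarrow> (\<forall>i\<in>players G. mixed_strategy G i (\<sigma> i))"

definition exp_payoff :: "('p, 's) game \<Rightarrow> 'p \<Rightarrow> ('p \<Rightarrow> 's \<Rightarrow> real) \<Rightarrow> real" where
  "exp_payoff G i \<sigma> = (\<Sum>s\<in>profiles G. payoff G i s * (\<Prod>k\<in>players G. \<sigma> k (s k)))"

definition nash_eq :: "('p, 's) game \<Rightarrow> ('p \<Rightarrow> 's \<Rightarrow> real) set" where
  "nash_eq G = {\<sigma>. mixed_profile G \<sigma> \<and>
     (\<forall>i\<in>players G. \<forall>t. mixed_strategy G i t \<longrightarrow>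
        exp_payoff G i (\<sigma>(i := t)) \<le> exp_payoff G i \<sigma>)}"

definition compatible ::
  "('p, 's) game \<Rightarrow> ('p, 's) game \<Rightarrow> ('p \<Rightarrow> 's \<Rightarrow> real) \<Rightarrow> ('p \<Rightarrow> 's \<Rightarrow> real) \<Rightarrow> bool" where
  "compatible G G' \<sigma> \<sigma>' \<longleftrightarrow>
     (\<forall>i\<in>players G \<inter> players G'. \<forall>j\<in>strats G i \<inter> strats G' i. \<sigma> i j = \<sigma>' i j)"

definition inflated :: "('p, 's) game \<Rightarrow> ('p, 's) game \<Rightarrow> bool" where
  "inflated G G' \<longleftrightarrow>
     players G \<subseteq> players G' \<and>
     (\<forall>i\<in>players G. strats G i \<subseteq> strats G' i) \<and>
     (\<forall>i\<in>players G. \<forall>s\<in>profiles G. \<forall>s'\<in>profiles G'.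
        (\<forall>j\<in>players G. s j = s' j) \<longrightarrow> payoff G i s = payoff G' i s') \<and>
     (\<forall>\<sigma>\<in>nash_eq G. \<exists>\<sigma>'\<in>nash_eq G'. compatible G G' \<sigma> \<sigma>') \<and>
     (\<forall>\<sigma>'\<in>nash_eq G'. \<exists>\<sigma>\<in>nash_eq G. compatible G G' \<sigma> \<sigma>')"

end

theory Submission
  imports Defs
begin

text \<open>Compatibility makes \<sigma>' k agree with \<sigma> k on S k, where \<sigma> k already has total
  mass 1, so \<sigma>' k vanishes on S' k - S k for every player k of G. Hence only those pure
  profiles of G' in which the players of G stay inside G contribute to h'_i(\<sigma>'), and on
  these P'_i coincides with P_i. The sum then factors as h_i(\<sigma>) times the total mass of
  the product distribution of the extra players N' - N, which is 1. Only the inclusion and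
  payoff clauses of the inflation relation are needed, not the correspondence of equilibria.\<close>

lemma sum_PiE_restrict_mult:
  fixes f g :: "('a \<Rightarrow> 'b) \<Rightarrow> 'c::comm_semiring_0"
  assumes "J \<subseteq> I"
  shows "(\<Sum>a\<in>PiE I S. f (restrict a J) * g (restrict a (I - J)))
    = (\<Sum>s\<in>PiE J S. f s) * (\<Sum>t\<in>PiE (I - J) S. g t)"
proof -
  have "(\<Sum>a\<in>PiE I S. f (restrict a J) * g (restrict a (I - J)))
      = (\<Sum>(s, t)\<in>PiE J S \<times> PiE (I - J) S. f s * g t)"
  proof (rule sum.reindex_bij_witness[where j = "\<lambda>a. (restrict a J, restrict a (I - J))"
        and i = "\<lambda>(s, t) k. if k \<in> J then s k else t k"])
    fix a assume a: "a \<in> PiE I S"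
    then show "(case (restrict a J, restrict a (I - J)) of
        (s, t) \<Rightarrow> \<lambda>k. if k \<in> J then s k else t k) = a"
      using assms by (auto simp: PiE_def extensional_def)
    show "(restrict a J, restrict a (I - J)) \<in> PiE J S \<times> PiE (I - J) S"
      using a assms by (auto simp: PiE_def Pi_def)
    show "(case (restrict a J, restrict a (I - J)) of (s, t) \<Rightarrow> f s * g t)
        = f (restrict a J) * g (restrict a (I - J))"
      by simp
  next
    fix b assume "b \<in> PiE J S \<times> PiE (I - J) S"
    then obtain s t where b: "b = (s, t)" "s \<in> PiE J S" "t \<in> PiE (I - J) S" by blast
    then show "(case b of (s, t) \<Rightarrow> \<lambda>k. if k \<in> J then s k else t k) \<in> PiE I S"
      using assms by (auto simp: PiE_def Pi_def extensional_def)
    show "(restrict (case b of (s, t) \<Rightarrow> \<lambda>k. if k \<in> J then s k else t k) J,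
           restrict (case b of (s, t) \<Rightarrow> \<lambda>k. if k \<in> J then s k else t k) (I - J)) = b"
      using b by (auto simp: PiE_def extensional_def intro!: ext)
  qed
  also have "\<dots> = (\<Sum>s\<in>PiE J S. f s) * (\<Sum>t\<in>PiE (I - J) S. g t)"
    by (simp add: sum_product sum.cartesian_product)
  finally show ?thesis .
qed

lemma sum_PiE_prod_eq_1:
  fixes p :: "'a \<Rightarrow> 'b \<Rightarrow> 'c::comm_semiring_1"
  assumes "finite I" and "\<And>k. k \<in> I \<Longrightarrow> finite (S k)"
    and "\<And>k. k \<in> I \<Longrightarrow> sum (p k) (S k) = 1"
  shows "(\<Sum>t\<in>PiE I S. \<Prod>k\<in>I. p k (t k)) = 1"
  using prod_sum_PiE[where f = p and A = I and B = S] assms by simp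

lemma nonneg_sum_subset_eq_imp_zero:
  fixes p :: "'a \<Rightarrow> 'b::ordered_ab_group_add"
  assumes "finite B" and "A \<subseteq> B" and "\<And>j. j \<in> B \<Longrightarrow> p j \<ge> 0"
    and "sum p A = sum p B" and "j \<in> B - A"
  shows "p j = 0"
proof -
  have "sum p B = sum p A + sum p (B - A)"
    using assms(1,2) by (metis add.commute sum.subset_diff)
  then have "sum p (B - A) = 0" using assms(4) by simp
  then show ?thesis
    using assms by (subst (asm) sum_nonneg_eq_0_iff) auto
qed

lemma sum_PiE_prod_shrink:
  fixes p :: "'a \<Rightarrow> 'b \<Rightarrow> 'c::comm_semiring_1" and f :: "('a \<Rightarrow> 'b) \<Rightarrow> 'c"
  assumes "finite I" and "\<And>k. k \<in> I \<Longrightarrow> finite (S k)"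
    and "\<And>k. k \<in> I \<Longrightarrow> T k \<subseteq> S k"
    and "\<And>k j. k \<in> I \<Longrightarrow> j \<in> S k - T k \<Longrightarrow> p k j = 0"
  shows "(\<Sum>a\<in>PiE I S. f a * (\<Prod>k\<in>I. p k (a k))) = (\<Sum>a\<in>PiE I T. f a * (\<Prod>k\<in>I. p k (a k)))"
proof (rule sum.mono_neutral_right)
  show "finite (PiE I S)" using assms(1,2) by (simp add: finite_PiE)
  show "PiE I T \<subseteq> PiE I S" using assms(3) by (auto simp: PiE_def Pi_def)
  show "\<forall>a\<in>PiE I S - PiE I T. f a * (\<Prod>k\<in>I. p k (a k)) = 0"
  proof
    fix a assume a: "a \<in> PiE I S - PiE I T"
    then obtain k where "k \<in> I" "a k \<in> S k - T k" by (auto simp: PiE_iff)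
    then have "(\<Prod>k\<in>I. p k (a k)) = 0"
      using assms(1,4) by (intro prod_zero) auto
    then show "f a * (\<Prod>k\<in>I. p k (a k)) = 0" by simp
  qed
qed

lemma inflated_payoff_restrict:
  assumes "inflated G G'" and "i \<in> players G"
    and "s' \<in> profiles G'" and "restrict s' (players G) \<in> profiles G"
  shows "payoff G i (restrict s' (players G)) = payoff G' i s'"
proof -
  have "\<forall>j\<in>players G. restrict s' (players G) j = s' j" by simp
  with assms show ?thesis unfolding inflated_def by blast
qed

lemma inflated_compatible_eq:
  assumes "inflated G G'" and "compatible G G' \<sigma> \<sigma>'"
    and "k \<in> players G" and "j \<in> strats G k"
  shows "\<sigma>' k j = \<sigma> k j"
proof -
  have "k \<in> players G \<inter> players G'" and "j \<in> strats G k \<inter> strats G' k"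
    using assms(1,3,4) unfolding inflated_def by auto
  with assms(2) show ?thesis unfolding compatible_def by simp
qed

lemma inflated_compatible_outside_zero:
  assumes "nf_game G'" and "inflated G G'"
    and "mixed_profile G \<sigma>" and "mixed_profile G' \<sigma>'" and "compatible G G' \<sigma> \<sigma>'"
    and "k \<in> players G" and "j \<in> strats G' k - strats G k"
  shows "\<sigma>' k j = 0"
proof (rule nonneg_sum_subset_eq_imp_zero[where p = "\<sigma>' k"])
  have k': "k \<in> players G'"
    using assms(2,6) unfolding inflated_def by auto
  then show "finite (strats G' k)" and "\<And>j. j \<in> strats G' k \<Longrightarrow> \<sigma>' k j \<ge> 0"
    using assms(1,4) unfolding nf_game_def mixed_profile_def mixed_strategy_def by auto
  show "strats G k \<subseteq> strats G' k"
    using assms(2,6) unfolding inflated_def by auto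
  have "sum (\<sigma>' k) (strats G k) = sum (\<sigma> k) (strats G k)"
    using inflated_compatible_eq[OF assms(2,5,6)] by simp
  then show "sum (\<sigma>' k) (strats G k) = sum (\<sigma>' k) (strats G' k)"
    using assms(3,4,6) k' unfolding mixed_profile_def mixed_strategy_def by simp
qed (fact assms(7))

definition confined_strats :: "('p, 's) game \<Rightarrow> ('p, 's) game \<Rightarrow> 'p \<Rightarrow> 's set" where
  "confined_strats G G' k = (if k \<in> players G then strats G k else strats G' k)"

lemma exp_payoff_confined:
  assumes "nf_game G'" and "inflated G G'"
    and "mixed_profile G \<sigma>" and "mixed_profile G' \<sigma>'" and "compatible G G' \<sigma> \<sigma>'"
  shows "exp_payoff G' i \<sigma>' = (\<Sum>a\<in>PiE (players G') (confined_strats G G').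
    payoff G' i a * (\<Prod>k\<in>players G'. \<sigma>' k (a k)))"
  unfolding exp_payoff_def profiles_def confined_strats_def
  using assms(1,2) inflated_compatible_outside_zero[OF assms]
  by (intro sum_PiE_prod_shrink) (auto simp: nf_game_def inflated_def split: if_splits)

lemma confined_profile_term_split:
  assumes "inflated G G'" and "i \<in> players G" and "compatible G G' \<sigma> \<sigma>'"
    and "finite (players G')" and "a \<in> PiE (players G') (confined_strats G G')"
  shows "payoff G' i a * (\<Prod>k\<in>players G'. \<sigma>' k (a k))
    = (payoff G i (restrict a (players G))
        * (\<Prod>k\<in>players G. \<sigma> k (restrict a (players G) k)))
      * (\<Prod>k\<in>players G' - players G. \<sigma>' k (restrict a (players G' - players G) k))"
proof -
  have N_sub: "players G \<subseteq> players G'"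
    using assms(1) by (simp add: inflated_def)
  have a_S: "a k \<in> strats G k" if "k \<in> players G" for k
    using that N_sub PiE_mem[OF assms(5), of k] by (auto simp: confined_strats_def)
  have "restrict a (players G) \<in> profiles G" and "a \<in> profiles G'"
    using assms(1,5) by (auto simp: inflated_def profiles_def PiE_iff confined_strats_def
        split: if_splits)
  then have "payoff G' i a = payoff G i (restrict a (players G))"
    using inflated_payoff_restrict[OF assms(1,2)] by simp
  moreover have "(\<Prod>k\<in>players G'. \<sigma>' k (a k))
      = (\<Prod>k\<in>players G. \<sigma> k (a k)) * (\<Prod>k\<in>players G' - players G. \<sigma>' k (a k))"
    using assms(4) N_sub a_S inflated_compatible_eq[OF assms(1,3)]
    by (simp add: prod.subset_diff)
  ultimately show ?thesis by simp
qed

theorem proposition1: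
  fixes G G' :: "('p, 's) game" and i :: 'p and \<sigma> \<sigma>' :: "'p \<Rightarrow> 's \<Rightarrow> real"
  assumes "nf_game G" and "nf_game G'"
    and "inflated G G'"
    and "i \<in> players G"
    and "mixed_profile G \<sigma>" and "mixed_profile G' \<sigma>'"
    and "compatible G G' \<sigma> \<sigma>'"
  shows "exp_payoff G i \<sigma> = exp_payoff G' i \<sigma>'"
proof -
  let ?N = "players G" and ?N' = "players G'" and ?C = "confined_strats G G'"
  have N_sub: "?N \<subseteq> ?N'" and fin: "finite ?N'" "\<And>k. k \<in> ?N' \<Longrightarrow> finite (strats G' k)"
    using assms(2,3) by (auto simp: inflated_def nf_game_def)
  have PiE_C: "PiE ?N ?C = profiles G" "PiE (?N' - ?N) ?C = PiE (?N' - ?N) (strats G')"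
    unfolding profiles_def by (auto simp: confined_strats_def intro!: PiE_cong)
  have "exp_payoff G' i \<sigma>' = (\<Sum>a\<in>PiE ?N' ?C. payoff G' i a * (\<Prod>k\<in>?N'. \<sigma>' k (a k)))"
    by (rule exp_payoff_confined[OF assms(2,3,5-7)])
  also have "\<dots> = (\<Sum>a\<in>PiE ?N' ?C.
      (payoff G i (restrict a ?N) * (\<Prod>k\<in>?N. \<sigma> k (restrict a ?N k)))
      * (\<Prod>k\<in>?N' - ?N. \<sigma>' k (restrict a (?N' - ?N) k)))"
    using confined_profile_term_split[OF assms(3,4,7) fin(1)] by (rule sum.cong[OF refl])
  also have "\<dots> = exp_payoff G i \<sigma> * (\<Sum>t\<in>PiE (?N' - ?N) (strats G'). \<Prod>k\<in>?N' - ?N. \<sigma>' k (t k))"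
    by (subst sum_PiE_restrict_mult[OF N_sub]) (simp only: PiE_C exp_payoff_def)
  also have "(\<Sum>t\<in>PiE (?N' - ?N) (strats G'). \<Prod>k\<in>?N' - ?N. \<sigma>' k (t k)) = 1"
    using fin assms(6) unfolding mixed_profile_def mixed_strategy_def
    by (intro sum_PiE_prod_eq_1) auto
  finally show ?thesis by simp
qed

end
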